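(* Let $0<q<1$. Define the $q$-Genocchi numbers $g_{n,q}$ and $q$-Genocchi polynomials $G_{n,q}(x)$ by \[ \frac{2t}{e_q(t)+1}=\sum_{n=0}^\infty g_{n,q}\frac{t^n}{[n]_q!},\qquad \frac{2t}{e_q(t)+1}e_q(tx)=\sum_{n=0}^\infty G_{n,q}(x)\frac{t^n}{[n]_q!} \] (for $t$ in a neighborhood of $0$). Then for every integer $n\ge1$, \[ \frac{1}{2q}\sum_{k=0}^{n-2}\begin{bmatrix}n\\k\end{bmatrix}_q g_{n-k,q}\,q^kG_{k,q}(x)+[n]_q\left(xq-\frac{1}{2q}\right)q^{n-1}G_{n-1,q}(x)+q^{n-1}G_{n,q}(x)-[n]_qG_{n,q}(qx)=0. \]
   Context: $[n]_q=\frac{1-q^n}{1-q}$, $[0]_q!=1$, $[n]_q!=[n]_q\cdots[1]_q$, $\begin{bmatrix}n\\k\end{bmatrix}_q=\frac{[n]_q!}{[k]_q![n-k]_q!}$, and $e_q(t)=\sum_{n\ge0}\frac{t^n}{[n]_q!}$. *)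

theory Defs
  imports Complex_Main
begin

definition qint :: "real \<Rightarrow> nat \<Rightarrow> real" where
  "qint q n = (1 - q ^ n) / (1 - q)"

definition qfact :: "real \<Rightarrow> nat \<Rightarrow> real" where
  "qfact q n = (\<Prod>k\<in>{1..n}. qint q k)"

definition qbinom :: "real \<Rightarrow> nat \<Rightarrow> nat \<Rightarrow> real" where
  "qbinom q n k = qfact q n / (qfact q k * qfact q (n - k))"

definition qexp :: "real \<Rightarrow> real \<Rightarrow> real" where
  "qexp q t = (\<Sum>n. t ^ n / qfact q n)"

definition qgenocchi_num :: "real \<Rightarrow> nat \<Rightarrow> real" where
  "qgenocchi_num q = (THE c. \<exists>e>0. \<forall>t. \<bar>t\<bar> < e \<longrightarrow>
      (\<lambda>n. c n * t ^ n / qfact q n) sums (2 * t / (qexp q t + 1)))"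

definition qgenocchi_poly :: "real \<Rightarrow> nat \<Rightarrow> real \<Rightarrow> real" where
  "qgenocchi_poly q n x = (THE c. \<exists>e>0. \<forall>t. \<bar>t\<bar> < e \<longrightarrow>
      (\<lambda>n. c n * t ^ n / qfact q n) sums (2 * t / (qexp q t + 1) * qexp q (t * x))) n"

end

theory Submission
  imports Defs "HOL-Analysis.FPS_Convergence"
begin

text \<open>Everything follows from the q-difference equation \<open>E(t) - E(qt) = (1 - q) t E(t)\<close> of the
  q-exponential \<open>E = e\<^sub>q\<close>. Eliminating \<open>E\<close> from \<open>A(t) (E(t) + 1) = 2t\<close> and
  \<open>A(qt) (E(qt) + 1) = 2qt\<close> gives a q-difference equation for the Genocchi series \<open>A(t) = 2t/(E(t) + 1)\<close>,
  \<open>2q (A(t) - A(qt)) = (1 - q) A(qt) (A(t) - 2t + 2)\<close>. Together with the equation for \<open>E(qxt)\<close> it yields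
  an identity between \<open>A(t) E(qxt) - A(qt) E(q\<^sup>2xt)\<close> and \<open>A(qt) E(qxt)\<close>, whose coefficient of \<open>t\<^sup>n\<close>
  is the claimed relation. The analytically defined numbers and polynomials are identified with the
  coefficients of these formal power series by uniqueness of power series expansions at 0.\<close>

lemma eventually_norm_less_fps_conv_radius:
  fixes F :: "'a::{banach,real_normed_div_algebra} fps"
  assumes "fps_conv_radius F > 0"
  shows "eventually (\<lambda>z. ereal (norm z) < fps_conv_radius F) (nhds 0)"
proof -
  have "eventually (\<lambda>z. z \<in> eball 0 (fps_conv_radius F)) (nhds 0)"
    using assms by (intro eventually_nhds_in_open) (auto simp: zero_ereal_def)
  then show ?thesis
    by eventually_elim (simp add: dist_0_norm)
qed

lemma has_fps_expansion_imp_sums: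
  fixes F :: "'a::{banach,real_normed_div_algebra} fps"
  assumes "f has_fps_expansion F"
  shows "eventually (\<lambda>z. (\<lambda>n. fps_nth F n * z ^ n) sums f z) (nhds 0)"
proof -
  have "eventually (\<lambda>z. ereal (norm z) < fps_conv_radius F) (nhds 0)"
    using assms by (intro eventually_norm_less_fps_conv_radius) (simp add: has_fps_expansion_def)
  moreover have "eventually (\<lambda>z. eval_fps F z = f z) (nhds 0)"
    using assms by (simp add: has_fps_expansion_def)
  ultimately show ?thesis
    by eventually_elim (auto dest!: sums_eval_fps)
qed

lemma eval_fps_eventually_zero_imp_zero:
  fixes F :: "'a::{real_normed_field,banach} fps"
  assumes radius: "fps_conv_radius F > 0"
    and zero: "eventually (\<lambda>z. eval_fps F z = 0) (nhds 0)"
  shows "F = 0"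
proof (rule ccontr)
  assume "F \<noteq> 0"
  define G where "G = fps_shift (subdegree F) F"
  have "isCont (eval_fps G) 0"
    using radius by (intro continuous_eval_fps) (simp add: G_def zero_ereal_def)
  then have lim: "(eval_fps G \<longlongrightarrow> fps_nth F (subdegree F)) (at 0)"
    by (simp add: isCont_def G_def eval_fps_at_0)
  from zero eventually_norm_less_fps_conv_radius[OF radius] have "eventually (\<lambda>z. z \<noteq> 0 \<longrightarrow> eval_fps G z = 0) (nhds 0)"
  proof eventually_elim
    case (elim z)
    then show ?case
      unfolding G_def using eval_fps_shift[OF order.refl, of z F] by simp
  qed
  then have "eventually (\<lambda>z. eval_fps G z = 0) (at 0)"
    by (simp add: eventually_at_filter)
  then have "((\<lambda>z::'a. 0) \<longlongrightarrow> fps_nth F (subdegree F)) (at 0)"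
    by (rule Lim_transform_eventually[OF lim])
  then have "fps_nth F (subdegree F) = 0"
    by (rule LIM_const_eq[symmetric])
  with \<open>F \<noteq> 0\<close> show False
    by simp
qed

lemma has_fps_expansion_unique:
  fixes F G :: "'a::{real_normed_field,banach} fps"
  assumes "f has_fps_expansion F" and "f has_fps_expansion G"
  shows "F = G"
  using eval_fps_eventually_zero_imp_zero[of "F - G"] has_fps_expansion_diff[OF assms]
  by (simp add: has_fps_expansion_def)

definition fps_dilate :: "'a::comm_ring_1 \<Rightarrow> 'a fps \<Rightarrow> 'a fps" where
  "fps_dilate c F = F oo (fps_const c * fps_X)"

lemma fps_dilate_nth [simp]: "fps_nth (fps_dilate c F) n = c ^ n * fps_nth F n"
  by (simp add: fps_dilate_def)

lemma fps_dilate_add: "fps_dilate c (F + G) = fps_dilate c F + fps_dilate c G"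
  by (simp add: fps_dilate_def fps_compose_add_distrib)

lemma fps_dilate_diff:
  "fps_dilate c (F - G) = fps_dilate c F - fps_dilate c (G :: 'a::comm_ring_1 fps)"
  by (simp add: fps_dilate_def fps_compose_sub_distrib)

lemma fps_dilate_mult:
  "fps_dilate c (F * G) = fps_dilate c F * fps_dilate c (G :: 'a::idom fps)"
  by (simp add: fps_dilate_def fps_compose_mult_distrib)

lemma fps_dilate_const [simp]: "fps_dilate c (fps_const a) = fps_const a"
  by (simp add: fps_dilate_def)

lemma fps_dilate_1 [simp]: "fps_dilate c 1 = 1"
  by (simp add: fps_dilate_def)

lemma fps_dilate_X: "fps_dilate c fps_X = fps_const c * fps_X"
  by (simp add: fps_dilate_def)

lemma fps_dilate_dilate: "fps_dilate a (fps_dilate b F) = fps_dilate (a * b) F"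
  by (simp add: fps_eq_iff power_mult_distrib)

lemma has_fps_expansion_dilate:
  fixes F :: "'a::{real_normed_field,banach} fps"
  assumes "f has_fps_expansion F"
  shows "(\<lambda>z. f (c * z)) has_fps_expansion fps_dilate c F"
proof (rule has_fps_expansionI)
  have "filterlim (\<lambda>z. c * z) (nhds 0) (nhds 0)"
    using tendsto_mult_left[of "\<lambda>z. z" 0 "nhds 0" c] by (simp add: filterlim_ident)
  with has_fps_expansion_imp_sums[OF assms]
  have "eventually (\<lambda>z. (\<lambda>n. fps_nth F n * (c * z) ^ n) sums f (c * z)) (nhds 0)"
    by (rule eventually_compose_filterlim)
  then show "eventually (\<lambda>z. (\<lambda>n. fps_nth (fps_dilate c F) n * z ^ n) sums f (c * z)) (nhds 0)"
    by eventually_elim (simp add: power_mult_distrib mult_ac)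
qed

lemma qint_eq_sum: "q \<noteq> 1 \<Longrightarrow> qint q n = (\<Sum>i<n. q ^ i)"
  by (simp add: qint_def sum_gp_strict)

lemma qint_ge_1:
  assumes "0 \<le> q" "q < 1" "1 \<le> n"
  shows "1 \<le> qint q n"
proof -
  have "(\<Sum>i<1. q ^ i) \<le> (\<Sum>i<n. q ^ i)"
    using assms by (intro sum_mono2) auto
  then show ?thesis
    using assms by (simp add: qint_eq_sum)
qed

lemma qfact_ge_1: "0 \<le> q \<Longrightarrow> q < 1 \<Longrightarrow> 1 \<le> qfact q n"
  unfolding qfact_def by (intro prod_ge_1) (simp add: qint_ge_1)

lemma qfact_nonzero: "0 \<le> q \<Longrightarrow> q < 1 \<Longrightarrow> qfact q n \<noteq> 0"
  using qfact_ge_1[of q n] by simp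

lemma qfact_0 [simp]: "qfact q 0 = 1"
  by (simp add: qfact_def)

lemma qfact_Suc: "qfact q (Suc n) = qint q (Suc n) * qfact q n"
  by (simp add: qfact_def prod.nat_ivl_Suc' mult.commute)

definition qexp_fps :: "real \<Rightarrow> real fps" where
  "qexp_fps q = Abs_fps (\<lambda>n. 1 / qfact q n)"

lemma has_fps_expansion_qexp:
  assumes "0 \<le> q" "q < 1"
  shows "qexp q has_fps_expansion qexp_fps q"
proof (rule has_fps_expansionI)
  have "eventually (\<lambda>t::real. \<bar>t\<bar> < 1) (nhds 0)"
    by (auto simp: eventually_nhds_metric dist_real_def intro!: exI[of _ 1])
  then show "eventually (\<lambda>t. (\<lambda>n. fps_nth (qexp_fps q) n * t ^ n) sums qexp q t) (nhds 0)"
  proof (rule eventually_mono)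
    fix t :: real
    assume "\<bar>t\<bar> < 1"
    have "norm (fps_nth (qexp_fps q) n * t ^ n) \<le> \<bar>t\<bar> ^ n" for n
    proof -
      have "1 \<le> qfact q n"
        using qfact_ge_1[OF assms] .
      then have "norm (fps_nth (qexp_fps q) n * t ^ n) = \<bar>t\<bar> ^ n / qfact q n"
        by (simp add: qexp_fps_def abs_mult power_abs)
      also have "\<dots> \<le> \<bar>t\<bar> ^ n / 1"
        using \<open>1 \<le> qfact q n\<close> by (intro frac_le) auto
      finally show ?thesis
        by simp
    qed
    moreover have "summable (\<lambda>n. \<bar>t\<bar> ^ n)"
      using \<open>\<bar>t\<bar> < 1\<close> by (intro summable_geometric) simp
    ultimately have "summable (\<lambda>n. fps_nth (qexp_fps q) n * t ^ n)"
      by (blast intro: summable_comparison_test')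
    then show "(\<lambda>n. fps_nth (qexp_fps q) n * t ^ n) sums qexp q t"
      by (simp add: summable_sums qexp_def qexp_fps_def)
  qed
qed

lemma qexp_fps_qdiff:
  assumes "0 \<le> q" "q < 1"
  shows "qexp_fps q - fps_dilate q (qexp_fps q) = fps_const (1 - q) * fps_X * qexp_fps q"
proof (rule fps_ext)
  fix n
  show "fps_nth (qexp_fps q - fps_dilate q (qexp_fps q)) n
      = fps_nth (fps_const (1 - q) * fps_X * qexp_fps q) n"
  proof (cases n)
    case (Suc m)
    have "qint q n \<noteq> 0"
      using qint_ge_1[OF assms, of n] Suc by auto
    have "1 - q ^ n = (1 - q) * qint q n"
      using assms by (simp add: qint_def)
    then have "(1 - q ^ n) / qfact q n = (1 - q) * qint q n / (qint q n * qfact q m)"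
      by (simp only: Suc qfact_Suc)
    also have "\<dots> = (1 - q) / qfact q m"
      using \<open>qint q n \<noteq> 0\<close> by simp
    finally show ?thesis
      using Suc by (simp add: qexp_fps_def diff_divide_distrib mult.assoc)
  qed (simp add: qexp_fps_def)
qed

definition qgenocchi_fps :: "real \<Rightarrow> real fps" where
  "qgenocchi_fps q = fps_const 2 * fps_X * inverse (qexp_fps q + 1)"

lemma qgenocchi_fps_mult: "qgenocchi_fps q * (qexp_fps q + 1) = 2 * fps_X"
proof -
  have "inverse (qexp_fps q + 1) * (qexp_fps q + 1) = 1"
    by (intro inverse_mult_eq_1) (simp add: qexp_fps_def)
  then show ?thesis
    by (simp add: qgenocchi_fps_def mult.assoc numeral_fps_const)
qed

lemma has_fps_expansion_qgenocchi:
  assumes "0 \<le> q" "q < 1"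
  shows "(\<lambda>t. 2 * t / (qexp q t + 1)) has_fps_expansion qgenocchi_fps q"
proof -
  have "(\<lambda>t. 2 * t * inverse (qexp q t + 1)) has_fps_expansion qgenocchi_fps q"
    unfolding qgenocchi_fps_def
    by (intro has_fps_expansion_mult has_fps_expansion_cmult_left has_fps_expansion_fps_X
          has_fps_expansion_inverse has_fps_expansion_add has_fps_expansion_qexp[OF assms])
       (auto simp: qexp_fps_def)
  then show ?thesis
    by (simp add: divide_inverse)
qed

lemma the_weighted_coeffs_eq:
  fixes f :: "real \<Rightarrow> real" and w :: "nat \<Rightarrow> real"
  assumes nonzero: "\<And>n. w n \<noteq> 0" and expansion: "f has_fps_expansion F"
  shows "(THE c. \<exists>e>0. \<forall>t. \<bar>t\<bar> < e \<longrightarrow> (\<lambda>n. c n * t ^ n / w n) sums f t)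
       = (\<lambda>n. w n * fps_nth F n)"
proof (rule the_equality)
  have ball: "(\<exists>e>0. \<forall>t. \<bar>t\<bar> < e \<longrightarrow> P t) \<longleftrightarrow> eventually P (nhds 0)" for P :: "real \<Rightarrow> bool"
    by (simp add: eventually_nhds_metric dist_real_def)
  show "\<exists>e>0. \<forall>t. \<bar>t\<bar> < e \<longrightarrow> (\<lambda>n. w n * fps_nth F n * t ^ n / w n) sums f t"
    unfolding ball using has_fps_expansion_imp_sums[OF expansion] nonzero by simp
  fix c
  assume "\<exists>e>0. \<forall>t. \<bar>t\<bar> < e \<longrightarrow> (\<lambda>n. c n * t ^ n / w n) sums f t"
  then have "f has_fps_expansion Abs_fps (\<lambda>n. c n / w n)"
    unfolding ball by (intro has_fps_expansionI) (simp add: ac_simps)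
  then have "Abs_fps (\<lambda>n. c n / w n) = F"
    using expansion by (rule has_fps_expansion_unique)
  then show "c = (\<lambda>n. w n * fps_nth F n)"
    using nonzero by (auto simp: fps_eq_iff field_simps)
qed

definition qgenocchi_poly_fps :: "real \<Rightarrow> real \<Rightarrow> real fps" where
  "qgenocchi_poly_fps q x = qgenocchi_fps q * fps_dilate x (qexp_fps q)"

lemma qgenocchi_num_eq:
  assumes "0 \<le> q" "q < 1"
  shows "qgenocchi_num q n = qfact q n * fps_nth (qgenocchi_fps q) n"
  unfolding qgenocchi_num_def
  by (subst the_weighted_coeffs_eq[OF _ has_fps_expansion_qgenocchi[OF assms]])
     (simp_all add: qfact_nonzero[OF assms])

lemma qgenocchi_poly_eq:
  assumes "0 \<le> q" "q < 1"
  shows "qgenocchi_poly q n x = qfact q n * fps_nth (qgenocchi_poly_fps q x) n"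
proof -
  have "(\<lambda>t. qexp q (t * x)) has_fps_expansion fps_dilate x (qexp_fps q)"
    using has_fps_expansion_dilate[OF has_fps_expansion_qexp[OF assms], of x]
    by (simp add: mult.commute)
  then have "(\<lambda>t. 2 * t / (qexp q t + 1) * qexp q (t * x)) has_fps_expansion qgenocchi_poly_fps q x"
    unfolding qgenocchi_poly_fps_def
    by (intro has_fps_expansion_mult has_fps_expansion_qgenocchi[OF assms])
  then show ?thesis
    unfolding qgenocchi_poly_def
    by (subst the_weighted_coeffs_eq) (simp_all add: qfact_nonzero[OF assms])
qed

lemma qgenocchi_fps_nth_0: "fps_nth (qgenocchi_fps q) 0 = 0"
  using arg_cong[OF qgenocchi_fps_mult, of "\<lambda>F. fps_nth F 0"] by (simp add: qexp_fps_def)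

lemma qgenocchi_fps_nth_1: "fps_nth (qgenocchi_fps q) 1 = 1"
  using arg_cong[OF qgenocchi_fps_mult, of "\<lambda>F. fps_nth F 1"] qgenocchi_fps_nth_0
  by (simp add: qexp_fps_def fps_mult_nth numeral_2_eq_2)

lemma qgenocchi_fps_qdiff:
  assumes q: "0 \<le> q" "q < 1"
  defines "A \<equiv> qgenocchi_fps q" and "Q \<equiv> fps_const q"
  shows "2 * Q * (A - fps_dilate q A) = (1 - Q) * fps_dilate q A * (A - 2 * fps_X + 2)"
proof -
  define E where "E = qexp_fps q"
  have AE: "A * (E + 1) = 2 * fps_X"
    unfolding A_def E_def by (rule qgenocchi_fps_mult)
  have "fps_dilate q (A * (E + 1)) = fps_dilate q (2 * fps_X)"
    by (simp only: AE)
  then have dAE: "fps_dilate q A * (fps_dilate q E + 1) = 2 * (Q * fps_X)"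
    by (simp add: Q_def fps_dilate_mult fps_dilate_add fps_dilate_X fps_numeral_fps_const)
  have Ediff: "E - fps_dilate q E = (1 - Q) * fps_X * E"
    using qexp_fps_qdiff[OF q] by (simp add: E_def Q_def flip: fps_const_sub)
  have "(2 * Q * (A - fps_dilate q A)) * ((E + 1) * (fps_dilate q E + 1))
      = ((1 - Q) * fps_dilate q A * (A - 2 * fps_X + 2)) * ((E + 1) * (fps_dilate q E + 1))"
    using AE dAE Ediff by algebra
  moreover have "(E + 1) * (fps_dilate q E + 1) \<noteq> 0"
    by (intro no_zero_divisors) (auto simp: E_def qexp_fps_def fps_eq_iff intro!: exI[of _ 0])
  ultimately show ?thesis
    by simp
qed

lemma qgenocchi_poly_fps_qdiff:
  assumes q: "0 \<le> q" "q < 1"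
  defines "Q \<equiv> fps_const q"
  shows "2 * Q * (qgenocchi_poly_fps q (q * x) - fps_dilate q (qgenocchi_poly_fps q (q * x)))
       = (1 - Q) * fps_dilate q (qgenocchi_poly_fps q x)
           * (qgenocchi_fps q - 2 * fps_X + 2 + fps_const (2 * x * q ^ 2) * fps_X)"
proof -
  define A where "A = qgenocchi_fps q"
  define F where "F = fps_dilate (q * x) (qexp_fps q)"
  have "fps_dilate (q * x) (qexp_fps q - fps_dilate q (qexp_fps q))
      = fps_dilate (q * x) (fps_const (1 - q) * fps_X * qexp_fps q)"
    by (simp only: qexp_fps_qdiff[OF q])
  then have Fdiff: "F - fps_dilate q F = (1 - Q) * (fps_const (q * x) * fps_X) * F"
    by (simp add: F_def Q_def fps_dilate_diff fps_dilate_mult fps_dilate_X fps_dilate_dilate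
        mult_ac flip: fps_const_sub)
  have P: "qgenocchi_poly_fps q (q * x) = A * F"
    and dP: "fps_dilate q (qgenocchi_poly_fps q x) = fps_dilate q A * F"
    by (simp_all add: qgenocchi_poly_fps_def A_def F_def fps_dilate_mult fps_dilate_dilate)
  have coeff: "fps_const (2 * x * q ^ 2) = 2 * Q * fps_const (q * x)"
    by (simp add: Q_def fps_numeral_fps_const power2_eq_square mult_ac)
  have "2 * Q * (A * F - fps_dilate q A * fps_dilate q F)
      = 2 * Q * (A - fps_dilate q A) * F + 2 * Q * fps_dilate q A * (F - fps_dilate q F)"
    by (simp add: algebra_simps)
  also have "\<dots> = (1 - Q) * fps_dilate q A * F
      * (A - 2 * fps_X + 2 + 2 * Q * fps_const (q * x) * fps_X)"
    unfolding qgenocchi_fps_qdiff[OF q, folded A_def Q_def] Fdiff by (simp add: algebra_simps)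
  finally show ?thesis
    unfolding P dP coeff A_def by (simp add: fps_dilate_mult)
qed

lemma qgenocchi_coeff_identity:
  assumes q: "0 \<le> q" "q < 1"
  defines "a \<equiv> fps_nth (qgenocchi_fps q)" and "p \<equiv> \<lambda>y. fps_nth (qgenocchi_poly_fps q y)"
  shows "(\<Sum>i<m. q ^ i * p x i * a (Suc m - i)) + (2 * x * q ^ 2 - 1) * q ^ m * p x m
         + 2 * q ^ Suc m * p x (Suc m) = 2 * q * qint q (Suc m) * p (q * x) (Suc m)"
proof -
  define dP where "dP = fps_dilate q (qgenocchi_poly_fps q x)"
  define W where "W = qgenocchi_fps q - 2 * fps_X + 2 + fps_const (2 * x * q ^ 2) * fps_X"
  have conv: "fps_nth (dP * qgenocchi_fps q) (Suc m)
      = (\<Sum>i<m. q ^ i * p x i * a (Suc m - i)) + q ^ m * p x m"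
    by (simp add: dP_def p_def a_def fps_mult_nth atLeast0AtMost lessThan_Suc_atMost[symmetric]
        qgenocchi_fps_nth_0 qgenocchi_fps_nth_1[simplified])
  have "dP * W = dP * qgenocchi_fps q + fps_const (2 * x * q ^ 2 - 2) * (fps_X * dP) + 2 * dP"
    by (simp add: W_def algebra_simps fps_numeral_fps_const flip: fps_const_sub)
  then have rhs: "fps_nth (dP * W) (Suc m)
      = (\<Sum>i<m. q ^ i * p x i * a (Suc m - i)) + (2 * x * q ^ 2 - 1) * q ^ m * p x m
        + 2 * q ^ Suc m * p x (Suc m)"
    by (simp add: conv) (simp add: dP_def p_def algebra_simps)
  have "2 * q * (1 - q ^ Suc m) * p (q * x) (Suc m)
      = fps_nth (2 * fps_const q * (qgenocchi_poly_fps q (q * x)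
          - fps_dilate q (qgenocchi_poly_fps q (q * x)))) (Suc m)"
    by (simp add: p_def algebra_simps fps_numeral_fps_const)
  also have "\<dots> = fps_nth ((1 - fps_const q) * (dP * W)) (Suc m)"
    using qgenocchi_poly_fps_qdiff[OF q, of x] by (simp only: dP_def W_def mult.assoc)
  also have "\<dots> = (1 - q) * fps_nth (dP * W) (Suc m)"
    by (simp add: left_diff_distrib)
  finally have "(1 - q) * (2 * q * qint q (Suc m) * p (q * x) (Suc m))
      = (1 - q) * ((\<Sum>i<m. q ^ i * p x i * a (Suc m - i)) + (2 * x * q ^ 2 - 1) * q ^ m * p x m
        + 2 * q ^ Suc m * p x (Suc m))"
    using q unfolding rhs by (simp add: qint_def)
  then show ?thesis
    using q by simp
qed

lemma qgenocchi_convolution_eq: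
  assumes q: "0 \<le> q" "q < 1"
  shows "(\<Sum>k<m. qbinom q (Suc m) k * qgenocchi_num q (Suc m - k) * q ^ k * qgenocchi_poly q k x)
       = qfact q (Suc m) * (\<Sum>i<m. q ^ i * fps_nth (qgenocchi_poly_fps q x) i
           * fps_nth (qgenocchi_fps q) (Suc m - i))"
  unfolding sum_distrib_left
proof (rule sum.cong)
  fix k
  show "qbinom q (Suc m) k * qgenocchi_num q (Suc m - k) * q ^ k * qgenocchi_poly q k x
      = qfact q (Suc m) * (q ^ k * fps_nth (qgenocchi_poly_fps q x) k
          * fps_nth (qgenocchi_fps q) (Suc m - k))"
    using qfact_nonzero[OF q, of k] qfact_nonzero[OF q, of "Suc m - k"]
    by (simp add: qbinom_def qgenocchi_num_eq[OF q] qgenocchi_poly_eq[OF q] field_simps)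
qed simp

theorem theorem7:
  fixes q x :: real and n :: nat
  assumes "0 < q" and "q < 1" and "1 \<le> n"
  shows "1 / (2 * q) * (\<Sum>k<n - 1. qbinom q n k * qgenocchi_num q (n - k) * q ^ k * qgenocchi_poly q k x)
      + qint q n * (x * q - 1 / (2 * q)) * q ^ (n - 1) * qgenocchi_poly q (n - 1) x
      + q ^ (n - 1) * qgenocchi_poly q n x - qint q n * qgenocchi_poly q n (q * x) = 0"
proof -
  have q: "0 \<le> q" "q < 1"
    using assms by auto
  obtain m where n: "n = Suc m"
    using assms(3) by (cases n) auto
  define a where "a = fps_nth (qgenocchi_fps q)"
  define p where "p = (\<lambda>y. fps_nth (qgenocchi_poly_fps q y))"
  have "1 / (2 * q) * (\<Sum>k<n - 1. qbinom q n k * qgenocchi_num q (n - k) * q ^ k * qgenocchi_poly q k x)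
      + qint q n * (x * q - 1 / (2 * q)) * q ^ (n - 1) * qgenocchi_poly q (n - 1) x
      + q ^ (n - 1) * qgenocchi_poly q n x - qint q n * qgenocchi_poly q n (q * x)
      = qfact q n / (2 * q) * ((\<Sum>i<m. q ^ i * p x i * a (Suc m - i))
        + (2 * x * q ^ 2 - 1) * q ^ m * p x m + 2 * q ^ Suc m * p x (Suc m)
        - 2 * q * qint q (Suc m) * p (q * x) (Suc m))"
    using assms(1) unfolding n diff_Suc_1 qgenocchi_convolution_eq[OF q]
    by (simp add: qgenocchi_poly_eq[OF q] qfact_Suc a_def p_def field_simps power2_eq_square)
  also have "\<dots> = 0"
    using qgenocchi_coeff_identity[OF q, of x m] by (simp add: a_def p_def)
  finally show ?thesis .
qed

end
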